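(* Let $A$ be a finite alphabet, $a\in A$, and let $M$ and $N$ be finite $\mathcal J$-trivial monoids with $|M|=m$ and $|N|=n$. Let $\rho$ be the number of elements in a longest strict $\leq_{\mathcal R}$-chain in $M$ and $\lambda$ the number of elements in a longest strict $\leq_{\mathcal L}$-chain in $N$. Let $\varphi:A^*\to M$ and $\psi:A^*\to N$ be homomorphisms, and let $\mu_a:A^*\to M\Diamond N$ be the associated homomorphism. Then for every $u\in A^*$ the set $(\mu_a(u))_{1,2}$ has at most $\rho+\lambda-1$ elements (and $\rho+\lambda-1\leq m+n-1$). In particular, $$|\mu_a(A^* )|\leq mn\left(\binom{mn}{0}+\binom{mn}{1}+\dots+\binom{mn}{\rho+\lambda-1}\right).$$
   Context: On a monoid $O$: $p\leq_{\mathcal R} q$ iff $p=qr$ for some $r\in O$; $p\leq_{\mathcal L} q$ iff $p=sq$ for some $s\in O$; $p\leq_{\mathcal J} q$ iff $p=sqr$ for some $r,s\in O$. $O$ is $\mathcal J$-trivial if $p\leq_{\mathcal J}q\leq_{\mathcal J}p$ implies $p=q$. For finite monoids $M,N$, the Schützenberger product $M\Diamond N$ is the set of $2\times2$ matrices $P$ with $P_{1,1}\in M$, $P_{2,2}\in N$, $P_{2,1}=\emptyset$, $P_{1,2}\subseteq M\times N$, with multiplication $(PQ)_{1,1}=P_{1,1}Q_{1,1}$, $(PQ)_{2,2}=P_{2,2}Q_{2,2}$, $(PQ)_{1,2}=\{(P_{1,1}x,y)\mid (x,y)\in Q_{1,2}\}\cup\{(z,tQ_{2,2})\mid (z,t)\in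 P_{1,2}\}$. Given $\varphi,\psi$ and $a\in A$, $\mu_a$ is defined by $(\mu_a(u))_{1,1}=\varphi(u)$, $(\mu_a(u))_{2,2}=\psi(u)$, $(\mu_a(u))_{1,2}=\{(\varphi(u'),\psi(u''))\mid u=u'au'',\ u',u''\in A^*\}$. *)

theory Defs
  imports Main
begin

definition R_le :: "'m::monoid_mult \<Rightarrow> 'm \<Rightarrow> bool" where
  "R_le p q \<longleftrightarrow> (\<exists>r. p = q * r)"

definition L_le :: "'m::monoid_mult \<Rightarrow> 'm \<Rightarrow> bool" where
  "L_le p q \<longleftrightarrow> (\<exists>s. p = s * q)"

definition J_le :: "'m::monoid_mult \<Rightarrow> 'm \<Rightarrow> bool" where
  "J_le p q \<longleftrightarrow> (\<exists>r s. p = s * q * r)"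

definition J_trivial :: "'m::monoid_mult itself \<Rightarrow> bool" where
  "J_trivial _ \<longleftrightarrow> (\<forall>p q::'m. J_le p q \<and> J_le q p \<longrightarrow> p = q)"

definition R_lt :: "'m::monoid_mult \<Rightarrow> 'm \<Rightarrow> bool" where
  "R_lt p q \<longleftrightarrow> R_le p q \<and> \<not> R_le q p"

definition L_lt :: "'m::monoid_mult \<Rightarrow> 'm \<Rightarrow> bool" where
  "L_lt p q \<longleftrightarrow> L_le p q \<and> \<not> L_le q p"

definition longest_R_chain :: "'m::{monoid_mult,finite} itself \<Rightarrow> nat" where
  "longest_R_chain _ = Max {length xs | xs :: 'm list. sorted_wrt (\<lambda>p q. R_lt q p) xs}"

definition longest_L_chain :: "'m::{monoid_mult,finite} itself \<Rightarrow> nat" where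
  "longest_L_chain _ = Max {length xs | xs :: 'm list. sorted_wrt (\<lambda>p q. L_lt q p) xs}"

definition monoid_hom :: "('a list \<Rightarrow> 'm::monoid_mult) \<Rightarrow> bool" where
  "monoid_hom f \<longleftrightarrow> f [] = 1 \<and> (\<forall>u v. f (u @ v) = f u * f v)"

text \<open>Element of the Schuetzenberger product M \<Diamond> N, represented as the triple
  (entry (1,1), entry (1,2), entry (2,2)); the entry (2,1) is always empty.\<close>
type_synonym ('m,'n) spmat = "'m \<times> ('m \<times> 'n) set \<times> 'n"

definition sp_mult :: "('m::monoid_mult,'n::monoid_mult) spmat \<Rightarrow> ('m,'n) spmat \<Rightarrow> ('m,'n) spmat" where
  "sp_mult P Q = (case P of (p11, p12, p22) \<Rightarrow> case Q of (q11, q12, q22) \<Rightarrow>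
     (p11 * q11, {(p11 * x, y) | x y. (x, y) \<in> q12} \<union> {(z, t * q22) | z t. (z, t) \<in> p12}, p22 * q22))"

definition mu :: "('a list \<Rightarrow> 'm) \<Rightarrow> ('a list \<Rightarrow> 'n) \<Rightarrow> 'a \<Rightarrow> 'a list \<Rightarrow> ('m,'n) spmat" where
  "mu \<phi> \<psi> a u = (\<phi> u, {(\<phi> u', \<psi> u'') | u' u''. u = u' @ [a] @ u''}, \<psi> u)"

end

theory Submission
  imports Defs
begin

text \<open>List the occurrences of \<open>a\<close> in \<open>u\<close> from left to right. The corresponding pairs
  \<open>(\<phi> u', \<psi> u'')\<close> have weakly \<open>\<le>\<^sub>R\<close>-descending first and weakly \<open>\<le>\<^sub>L\<close>-ascending second
  components. In a \<open>\<J>\<close>-trivial monoid both preorders are antisymmetric, so the pairs form a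
  chain in a product of two chains; each new pair must leave the previous ones in at least one
  coordinate for good, whence at most \<open>\<rho> + \<lambda> - 1\<close> distinct pairs. The bound on \<open>|\<mu>\<^sub>a(A\<^sup>*)|\<close>
  then just counts diagonal entries and sets of at most that many pairs.\<close>

lemma R_le_antisym:
  assumes "J_trivial TYPE('m::monoid_mult)" "R_le (x::'m) y" "R_le y x"
  shows "x = y"
  using assms unfolding J_trivial_def J_le_def R_le_def by (metis mult_1_left)

lemma L_le_antisym:
  assumes "J_trivial TYPE('m::monoid_mult)" "L_le (x::'m) y" "L_le y x"
  shows "x = y"
  using assms unfolding J_trivial_def J_le_def L_le_def by (metis mult_1_right)

definition longest_chain :: "('m::finite \<Rightarrow> 'm \<Rightarrow> bool) \<Rightarrow> nat" where
  "longest_chain r = Max {length xs | xs. sorted_wrt (\<lambda>p q. r q p \<and> \<not> r p q) xs}"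

lemma longest_R_chain_eq:
  "longest_R_chain TYPE('m::{monoid_mult,finite}) = longest_chain (R_le :: 'm \<Rightarrow> 'm \<Rightarrow> bool)"
  unfolding longest_R_chain_def longest_chain_def R_lt_def by simp

lemma longest_L_chain_eq:
  "longest_L_chain TYPE('m::{monoid_mult,finite}) = longest_chain (L_le :: 'm \<Rightarrow> 'm \<Rightarrow> bool)"
  unfolding longest_L_chain_def longest_chain_def L_lt_def by simp

lemma chain_lengths_le_card:
  "{length xs | xs :: 'm::finite list. sorted_wrt (\<lambda>p q. r q p \<and> \<not> r p q) xs}
     \<subseteq> {..card (UNIV :: 'm set)}"
proof clarify
  fix xs :: "'m list"
  assume "sorted_wrt (\<lambda>p q. r q p \<and> \<not> r p q) xs"
  then have "distinct xs" by (induction xs) auto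
  then have "length xs = card (set xs)" by (simp add: distinct_card)
  also have "\<dots> \<le> card (UNIV :: 'm set)" by (rule card_mono) auto
  finally show "length xs \<le> card (UNIV :: 'm set)" .
qed

lemma longest_chain_le_card:
  "longest_chain (r :: 'm::finite \<Rightarrow> 'm \<Rightarrow> bool) \<le> card (UNIV :: 'm set)"
proof -
  have "length [] \<in> {length xs | xs :: 'm list. sorted_wrt (\<lambda>p q. r q p \<and> \<not> r p q) xs}"
    by auto
  then show ?thesis
    using chain_lengths_le_card[of r] unfolding longest_chain_def
    by (subst Max_le_iff) (auto intro: finite_subset simp del: list.size)
qed

lemma card_set_le_longest_chain:
  fixes xs :: "'m::finite list"
  assumes sorted: "sorted_wrt (\<lambda>p q. r q p) xs"
    and antisym: "\<And>x y. r x y \<Longrightarrow> r y x \<Longrightarrow> x = y"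
  shows "card (set xs) \<le> longest_chain r"
proof -
  have "sorted_wrt (\<lambda>p q. r q p) (remdups xs)"
    using sorted by (induction xs) auto
  moreover have strict: "sorted_wrt (\<lambda>p q. r q p \<and> \<not> r p q) ys"
    if "sorted_wrt (\<lambda>p q. r q p) ys" "distinct ys" for ys
    using that by (induction ys) (auto dest: antisym)
  ultimately have "sorted_wrt (\<lambda>p q. r q p \<and> \<not> r p q) (remdups xs)"
    by simp
  then have "length (remdups xs) \<le> longest_chain r"
    unfolding longest_chain_def
    by (intro Max_ge finite_subset[OF chain_lengths_le_card]) auto
  then show ?thesis by (simp add: length_remdups_card_conv)
qed

lemma sorted_wrt_related_or_related:
  assumes "sorted_wrt P xs" "y \<in> set xs" "z \<in> set xs" "y \<noteq> z"
  shows "P y z \<or> P z y"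
proof -
  obtain i j where "i < length xs" "j < length xs" "y = xs ! i" "z = xs ! j"
    using assms(2,3) by (auto simp: in_set_conv_nth)
  moreover from this have "i \<noteq> j" using assms(4) by auto
  ultimately show ?thesis using sorted_wrt_nth_less[OF assms(1)] by (metis linorder_neqE_nat)
qed

text \<open>The head of the list cannot share its first coordinate with one later element and its
  second with another: comparing these two would, by antisymmetry, force one of them to equal
  the head.\<close>
lemma card_product_chain:
  assumes "sorted_wrt (\<lambda>s t. r\<^sub>1 (fst t) (fst s) \<and> r\<^sub>2 (snd s) (snd t)) xs"
    and antisym\<^sub>1: "\<And>x y. r\<^sub>1 x y \<Longrightarrow> r\<^sub>1 y x \<Longrightarrow> x = y"
    and antisym\<^sub>2: "\<And>x y. r\<^sub>2 x y \<Longrightarrow> r\<^sub>2 y x \<Longrightarrow> x = y"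
  shows "card (set xs) \<le> card (fst ` set xs) + card (snd ` set xs) - 1"
  using assms(1)
proof (induction xs)
  case Nil
  then show ?case by simp
next
  case (Cons x xs)
  obtain p q where x: "x = (p, q)" by fastforce
  have sorted: "sorted_wrt (\<lambda>s t. r\<^sub>1 (fst t) (fst s) \<and> r\<^sub>2 (snd s) (snd t)) xs"
    and below: "\<And>y. y \<in> set xs \<Longrightarrow> r\<^sub>1 (fst y) p \<and> r\<^sub>2 q (snd y)"
    using Cons.prems x by auto
  have IH: "card (set xs) \<le> card (fst ` set xs) + card (snd ` set xs) - 1"
    using Cons.IH sorted .
  have fst_mono: "card (fst ` set xs) \<le> card (fst ` set (x # xs))"
    and snd_mono: "card (snd ` set xs) \<le> card (snd ` set (x # xs))"
    by (auto intro: card_mono)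
  consider "xs = []" | "x \<in> set xs" | "xs \<noteq> []" "x \<notin> set xs" by blast
  then show ?case
  proof cases
    case 1
    then show ?thesis by simp
  next
    case 2
    then show ?thesis using IH fst_mono snd_mono by (simp add: insert_absorb)
  next
    case 3
    have new_coordinate: "p \<notin> fst ` set xs \<or> q \<notin> snd ` set xs"
    proof (rule ccontr)
      assume "\<not> ?thesis"
      then obtain q' p' where y: "(p, q') \<in> set xs" and z: "(p', q) \<in> set xs" by force
      with 3 x have "q' \<noteq> q" "p' \<noteq> p" by auto
      moreover have "r\<^sub>1 p' p" "r\<^sub>2 q q'" using below[OF y] below[OF z] by auto
      ultimately show False
        using sorted_wrt_related_or_related[OF sorted y z] antisym\<^sub>1 antisym\<^sub>2 by force
    qed
    have "card (fst ` set xs) \<ge> 1" using 3 by (simp add: Suc_le_eq card_gt_0_iff)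
    then show ?thesis using IH new_coordinate x 3 by (auto simp: card_insert_if)
  qed
qed

lemma monoid_hom_take_R_le:
  assumes "monoid_hom \<phi>" "i \<le> j"
  shows "R_le (\<phi> (take j u)) (\<phi> (take i u))"
proof -
  have "take j u = take i u @ take (j - i) (drop i u)"
    using take_add[of i "j - i" u] assms(2) by simp
  then show ?thesis using assms(1) unfolding R_le_def monoid_hom_def by metis
qed

lemma monoid_hom_drop_L_le:
  assumes "monoid_hom \<psi>" "i \<le> j"
  shows "L_le (\<psi> (drop i u)) (\<psi> (drop j u))"
proof -
  have "drop i u = take (j - i) (drop i u) @ drop j u"
    using append_take_drop_id[of "j - i" "drop i u"] assms(2) by simp
  then show ?thesis using assms(1) unfolding L_le_def monoid_hom_def by metis
qed

definition occurrence_pairs ::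
  "('a list \<Rightarrow> 'm) \<Rightarrow> ('a list \<Rightarrow> 'n) \<Rightarrow> 'a \<Rightarrow> 'a list \<Rightarrow> ('m \<times> 'n) list" where
  "occurrence_pairs \<phi> \<psi> a u =
     map (\<lambda>i. (\<phi> (take i u), \<psi> (drop (Suc i) u))) (filter (\<lambda>i. u ! i = a) [0..<length u])"

lemma set_occurrence_pairs:
  "set (occurrence_pairs \<phi> \<psi> a u) = {(\<phi> u', \<psi> u'') | u' u''. u = u' @ [a] @ u''}"
proof (intro equalityI subsetI)
  fix x assume "x \<in> set (occurrence_pairs \<phi> \<psi> a u)"
  then obtain i where i: "i < length u" "u ! i = a" and x: "x = (\<phi> (take i u), \<psi> (drop (Suc i) u))"
    unfolding occurrence_pairs_def by auto
  have "u = take i u @ [a] @ drop (Suc i) u" using i id_take_nth_drop by fastforce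
  then show "x \<in> {(\<phi> u', \<psi> u'') | u' u''. u = u' @ [a] @ u''}" using x by blast
next
  fix x assume "x \<in> {(\<phi> u', \<psi> u'') | u' u''. u = u' @ [a] @ u''}"
  then obtain u' u'' where x: "x = (\<phi> u', \<psi> u'')" and u: "u = u' @ [a] @ u''" by blast
  then have "length u' < length u" "u ! length u' = a"
    "take (length u') u = u'" "drop (Suc (length u')) u = u''" by auto
  then show "x \<in> set (occurrence_pairs \<phi> \<psi> a u)" unfolding occurrence_pairs_def x by force
qed

lemma sorted_occurrence_pairs:
  assumes "monoid_hom \<phi>" "monoid_hom \<psi>"
  shows "sorted_wrt (\<lambda>s t. R_le (fst t) (fst s) \<and> L_le (snd s) (snd t)) (occurrence_pairs \<phi> \<psi> a u)"
proof -
  have "sorted_wrt (\<lambda>i j. R_le (\<phi> (take j u)) (\<phi> (take i u)) \<and>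
      L_le (\<psi> (drop (Suc i) u)) (\<psi> (drop (Suc j) u))) [0..<length u]"
    by (intro sorted_wrt_mono_rel[OF _ sorted_wrt_upt])
      (simp add: monoid_hom_take_R_le[OF assms(1)] monoid_hom_drop_L_le[OF assms(2)])
  then show ?thesis unfolding occurrence_pairs_def sorted_wrt_map by (intro sorted_wrt_filter) simp
qed

lemma card_mu_entry_le:
  fixes \<phi> :: "'a list \<Rightarrow> 'm::{monoid_mult,finite}" and \<psi> :: "'a list \<Rightarrow> 'n::{monoid_mult,finite}"
  assumes "J_trivial TYPE('m)" "J_trivial TYPE('n)" "monoid_hom \<phi>" "monoid_hom \<psi>"
  shows "card (fst (snd (mu \<phi> \<psi> a u)))
    \<le> longest_chain (R_le :: 'm \<Rightarrow> 'm \<Rightarrow> bool) + longest_chain (L_le :: 'n \<Rightarrow> 'n \<Rightarrow> bool) - 1"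
proof -
  let ?xs = "occurrence_pairs \<phi> \<psi> a u"
  have sorted: "sorted_wrt (\<lambda>s t. R_le (fst t) (fst s) \<and> L_le (snd s) (snd t)) ?xs"
    using sorted_occurrence_pairs[OF assms(3,4)] .
  have "sorted_wrt (\<lambda>p q. R_le q p) (map fst ?xs)"
    unfolding sorted_wrt_map by (rule sorted_wrt_mono_rel[OF _ sorted]) auto
  then have fst: "card (fst ` set ?xs) \<le> longest_chain (R_le :: 'm \<Rightarrow> 'm \<Rightarrow> bool)"
    using card_set_le_longest_chain R_le_antisym[OF assms(1)] by fastforce
  have "sorted_wrt (\<lambda>p q. L_le q p) (rev (map snd ?xs))"
    unfolding sorted_wrt_rev sorted_wrt_map by (rule sorted_wrt_mono_rel[OF _ sorted]) auto
  then have snd: "card (snd ` set ?xs) \<le> longest_chain (L_le :: 'n \<Rightarrow> 'n \<Rightarrow> bool)"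
    using card_set_le_longest_chain L_le_antisym[OF assms(2)] by fastforce
  have "card (set ?xs) \<le> card (fst ` set ?xs) + card (snd ` set ?xs) - 1"
    using card_product_chain[OF sorted] R_le_antisym[OF assms(1)] L_le_antisym[OF assms(2)]
    by blast
  with fst snd show ?thesis by (simp add: mu_def set_occurrence_pairs)
qed

lemma card_sets_card_le:
  "card {S :: 'x::finite set. card S \<le> k} = (\<Sum>i = 0..k. card (UNIV :: 'x set) choose i)"
proof -
  have "{S :: 'x set. card S \<le> k} = (\<Union>i\<in>{0..k}. {S. S \<subseteq> UNIV \<and> card S = i})" by auto
  moreover have "card (\<Union>i\<in>{0..k}. {S :: 'x set. S \<subseteq> UNIV \<and> card S = i}) =
      (\<Sum>i = 0..k. card {S :: 'x set. S \<subseteq> UNIV \<and> card S = i})"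
    by (rule card_UN_disjoint) auto
  ultimately have "card {S :: 'x set. card S \<le> k} =
      (\<Sum>i = 0..k. card {S :: 'x set. S \<subseteq> UNIV \<and> card S = i})"
    by simp
  then show ?thesis using n_subsets[of "UNIV :: 'x set"] by simp
qed

lemma card_range_spmat_le:
  fixes f :: "'x \<Rightarrow> ('m::finite, 'n::finite) spmat"
  assumes "\<And>u. card (fst (snd (f u))) \<le> k"
  shows "card (range f) \<le> card (UNIV :: 'm set) * card (UNIV :: 'n set) *
    (\<Sum>i = 0..k. (card (UNIV :: 'm set) * card (UNIV :: 'n set)) choose i)"
proof -
  have "range f \<subseteq> UNIV \<times> {S. card S \<le> k} \<times> UNIV"
    using assms by (auto simp: image_iff) (metis fst_conv snd_conv)
  then have "card (range f) \<le> card ((UNIV :: 'm set) \<times> {S :: ('m \<times> 'n) set. card S \<le> k} \<times> (UNIV :: 'n set))"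
    by (intro card_mono) auto
  also have "\<dots> = card (UNIV :: 'm set) * card {S :: ('m \<times> 'n) set. card S \<le> k} * card (UNIV :: 'n set)"
    by (simp add: card_cartesian_product)
  also have "card {S :: ('m \<times> 'n) set. card S \<le> k} =
      (\<Sum>i = 0..k. (card (UNIV :: 'm set) * card (UNIV :: 'n set)) choose i)"
    by (simp add: card_sets_card_le UNIV_Times_UNIV[symmetric] card_cartesian_product
        del: UNIV_Times_UNIV)
  finally show ?thesis by (simp add: ac_simps)
qed

theorem proposition6:
  fixes a :: "'a::finite"
    and \<phi> :: "'a list \<Rightarrow> 'm::{monoid_mult,finite}"
    and \<psi> :: "'a list \<Rightarrow> 'n::{monoid_mult,finite}"
  assumes "J_trivial TYPE('m)" and "J_trivial TYPE('n)"
    and "monoid_hom \<phi>" and "monoid_hom \<psi>"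
  shows "(\<forall>u. card (fst (snd (mu \<phi> \<psi> a u)))
              \<le> longest_R_chain TYPE('m) + longest_L_chain TYPE('n) - 1)
    \<and> longest_R_chain TYPE('m) + longest_L_chain TYPE('n) - 1 \<le> card (UNIV :: 'm set) + card (UNIV :: 'n set) - 1
    \<and> card (range (mu \<phi> \<psi> a))
        \<le> card (UNIV :: 'm set) * card (UNIV :: 'n set) *
          (\<Sum>i = 0..longest_R_chain TYPE('m) + longest_L_chain TYPE('n) - 1.
              (card (UNIV :: 'm set) * card (UNIV :: 'n set)) choose i)"
proof (intro conjI)
  show entry_bound: "\<forall>u. card (fst (snd (mu \<phi> \<psi> a u)))
      \<le> longest_R_chain TYPE('m) + longest_L_chain TYPE('n) - 1"
    using card_mu_entry_le[OF assms] by (simp add: longest_R_chain_eq longest_L_chain_eq)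
  show "longest_R_chain TYPE('m) + longest_L_chain TYPE('n) - 1
      \<le> card (UNIV :: 'm set) + card (UNIV :: 'n set) - 1"
    using longest_chain_le_card[of "R_le :: 'm \<Rightarrow> 'm \<Rightarrow> bool"]
      longest_chain_le_card[of "L_le :: 'n \<Rightarrow> 'n \<Rightarrow> bool"]
    by (simp add: longest_R_chain_eq longest_L_chain_eq)
  show "card (range (mu \<phi> \<psi> a)) \<le> card (UNIV :: 'm set) * card (UNIV :: 'n set) *
      (\<Sum>i = 0..longest_R_chain TYPE('m) + longest_L_chain TYPE('n) - 1.
        (card (UNIV :: 'm set) * card (UNIV :: 'n set)) choose i)"
    using entry_bound by (intro card_range_spmat_le) blast
qed

end
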